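(* Let $\mathcal{X}$ be a connected $n$-premaniplex with base flag $x_0$, let $(\mathcal{Y},\eta)$ be an $(n,m)$-voltage operator with $\mathcal{Y}$ connected and base flag $y_0$, let $N=\operatorname{Stab}_{\mathcal{C}^n}(x_0)$, $L=\operatorname{Stab}_{\mathcal{C}^m}(y_0)$, and let $\zeta:L\to\mathcal{C}^n$ be $\zeta(\omega)=\eta(W_\omega(y_0))$. Then $\operatorname{Stab}_{\mathcal{C}^m}(x_0,y_0)=\zeta^{-1}(N)$. In particular, if $\mathcal{X}\rtimes_\eta\mathcal{Y}$ is connected, it is isomorphic to the coset premaniplex $\mathcal{C}^m/\zeta^{-1}(N)$, with $(x_0,y_0)$ corresponding to the coset $\zeta^{-1}(N)$.
   Context: An $n$-premaniplex is an edge-coloured graph (semi-edges and parallel edges allowed) with colours $\{0,\dots,n-1\}$ such that every vertex (flag) is the start of exactly one dart of each colour, and for $|i-j|\ge2$ alternating $i,j$-paths of length 4 are closed; $x^i$ is the $i$-adjacent flag of $x$. $\mathcal{C}^n=\langle r_0,\dots,r_{n-1}\mid r_i^2,\ (r_ir_j)^2\ (|i-j|\ge2)\rangle$ acts on the left on flags by $r_ix=x^i$. For a subgroup $K\le\mathcal{C}^m$, the coset premaniplex $\mathcal{C}^m/K$ has flags the left cosets $\omega K$, with $(\omega K)^i=r_i\omega K$. For a flag $y$ of an $m$-premaniplex $\mathcal{Y}$ and $\omega\in\mathcal{C}^m$, $W_\omega(y)$ is the homotopy class of paths from $y$ whose colour sequence $i_1,\dots,i_k$ satisfies $r_{i_k}\cdots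 r_{i_1}=\omega$; these form the fundamental groupoid $\Pi(\mathcal{Y})$. A voltage assignment $\eta:\Pi(\mathcal{Y})\to\mathcal{C}^n$ satisfies $\eta(W_1W_2)=\eta(W_2)\eta(W_1)$; $(\mathcal{Y},\eta)$ is an $(n,m)$-voltage operator. $\mathcal{X}\rtimes_\eta\mathcal{Y}$ has flags $\mathcal{X}\times\mathcal{Y}$ and $(x,y)^i=(\eta(W_{r_i}(y))x,r_iy)$, $i\in\{0,\dots,m-1\}$; hence $\omega(x,y)=(\eta(W_\omega(y))x,\omega y)$. *)

theory Defs
  imports "HOL-Algebra.Coset"
begin

text \<open>Words over the generators r_0..r_{n-1}; the word [i1,...,ik] stands for
  r_{i1} r_{i2} ... r_{ik}.\<close>

definition words :: "nat \<Rightarrow> nat list set" where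
  "words n = {w. set w \<subseteq> {..<n}}"

inductive cox_eq :: "nat \<Rightarrow> nat list \<Rightarrow> nat list \<Rightarrow> bool" for n where
  refl:  "w \<in> words n \<Longrightarrow> cox_eq n w w"
| sym:   "cox_eq n u v \<Longrightarrow> cox_eq n v u"
| trans: "cox_eq n u v \<Longrightarrow> cox_eq n v w \<Longrightarrow> cox_eq n u w"
| invol: "u \<in> words n \<Longrightarrow> v \<in> words n \<Longrightarrow> i < n \<Longrightarrow>
          cox_eq n (u @ [i, i] @ v) (u @ v)"
| comm:  "u \<in> words n \<Longrightarrow> v \<in> words n \<Longrightarrow> i < n \<Longrightarrow> j < n \<Longrightarrow>
          i + 2 \<le> j \<or> j + 2 \<le> i \<Longrightarrow> cox_eq n (u @ [i, j, i, j] @ v) (u @ v)"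

definition cox_class :: "nat \<Rightarrow> nat list \<Rightarrow> nat list set" where
  "cox_class n w = {v. cox_eq n w v}"

definition cox_rep :: "nat list set \<Rightarrow> nat list" where
  "cox_rep A = (SOME w. w \<in> A)"

definition coxeter :: "nat \<Rightarrow> nat list set monoid" where
  "coxeter n = \<lparr> carrier = cox_class n ` words n,
                 mult = (\<lambda>A B. cox_class n (cox_rep A @ cox_rep B)),
                 one = cox_class n [] \<rparr>"

definition cox_gen :: "nat \<Rightarrow> nat \<Rightarrow> nat list set" where
  "cox_gen n i = cox_class n [i]"

text \<open>An n-premaniplex is given by its set of flags F and the adjacency maps
  adj i x = x^i (i < n). Every flag starts exactly one dart of each colour, so
  x^i is a function and (x^i)^i = x; semi-edges correspond to x^i = x.\<close>
definition premaniplex :: "nat \<Rightarrow> 'a set \<Rightarrow> (nat \<Rightarrow> 'a \<Rightarrow> 'a) \<Rightarrow> bool" where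
  "premaniplex n F adj \<longleftrightarrow>
     (\<forall>i<n. \<forall>x\<in>F. adj i x \<in> F \<and> adj i (adj i x) = x) \<and>
     (\<forall>i<n. \<forall>j<n. (i + 2 \<le> j \<or> j + 2 \<le> i) \<longrightarrow>
        (\<forall>x\<in>F. adj i (adj j (adj i (adj j x))) = x))"

text \<open>Action of a word: r_{i1}...r_{ik} x = x^{ik ... i1} (rightmost letter first).\<close>
definition word_act :: "(nat \<Rightarrow> 'a \<Rightarrow> 'a) \<Rightarrow> nat list \<Rightarrow> 'a \<Rightarrow> 'a" where
  "word_act adj w x = foldr adj w x"

definition cox_act :: "(nat \<Rightarrow> 'a \<Rightarrow> 'a) \<Rightarrow> nat list set \<Rightarrow> 'a \<Rightarrow> 'a" where
  "cox_act adj \<omega> x = word_act adj (cox_rep \<omega>) x"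

definition pm_connected :: "nat \<Rightarrow> 'a set \<Rightarrow> (nat \<Rightarrow> 'a \<Rightarrow> 'a) \<Rightarrow> bool" where
  "pm_connected n F adj \<longleftrightarrow> (\<forall>x\<in>F. \<forall>y\<in>F. \<exists>w\<in>words n. word_act adj w x = y)"

definition stab :: "nat \<Rightarrow> (nat \<Rightarrow> 'a \<Rightarrow> 'a) \<Rightarrow> 'a \<Rightarrow> nat list set set" where
  "stab n adj x = {\<omega> \<in> carrier (coxeter n). cox_act adj \<omega> x = x}"

definition pm_iso :: "nat \<Rightarrow> 'a set \<Rightarrow> (nat \<Rightarrow> 'a \<Rightarrow> 'a) \<Rightarrow> 'b set \<Rightarrow> (nat \<Rightarrow> 'b \<Rightarrow> 'b)
                       \<Rightarrow> ('a \<Rightarrow> 'b) \<Rightarrow> bool" where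
  "pm_iso m F adj G adj' \<phi> \<longleftrightarrow>
     bij_betw \<phi> F G \<and> (\<forall>i<m. \<forall>x\<in>F. \<phi> (adj i x) = adj' i (\<phi> x))"

definition coset_flags :: "nat \<Rightarrow> nat list set set \<Rightarrow> nat list set set set" where
  "coset_flags m K = {\<omega> <#\<^bsub>coxeter m\<^esub> K | \<omega>. \<omega> \<in> carrier (coxeter m)}"

definition coset_adj :: "nat \<Rightarrow> nat \<Rightarrow> nat list set set \<Rightarrow> nat list set set" where
  "coset_adj m i C = cox_gen m i <#\<^bsub>coxeter m\<^esub> C"

text \<open>The homotopy class W_\<omega>(y) of the fundamental groupoid is identified with the
  pair (y, \<omega>); concatenation W_\<omega>(y) W_\<nu>(\<omega> y) = W_{\<nu>\<omega>}(y). A voltage assignment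
  eta : Pi(Y) -> C^n with eta(W1 W2) = eta(W2) eta(W1) is thus a function
  eta y \<omega> satisfying eta y (\<nu>\<omega>) = eta (\<omega> y) \<nu> * eta y \<omega>.\<close>
definition voltage_assignment :: "nat \<Rightarrow> nat \<Rightarrow> 'b set \<Rightarrow> (nat \<Rightarrow> 'b \<Rightarrow> 'b)
      \<Rightarrow> ('b \<Rightarrow> nat list set \<Rightarrow> nat list set) \<Rightarrow> bool" where
  "voltage_assignment n m FY adjY \<eta> \<longleftrightarrow>
     (\<forall>y\<in>FY. \<forall>\<omega>\<in>carrier (coxeter m). \<eta> y \<omega> \<in> carrier (coxeter n)) \<and>
     (\<forall>y\<in>FY. \<forall>\<omega>\<in>carrier (coxeter m). \<forall>\<nu>\<in>carrier (coxeter m).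
        \<eta> y (\<nu> \<otimes>\<^bsub>coxeter m\<^esub> \<omega>) = \<eta> (cox_act adjY \<omega> y) \<nu> \<otimes>\<^bsub>coxeter n\<^esub> \<eta> y \<omega>)"

definition voltage_operator :: "nat \<Rightarrow> nat \<Rightarrow> 'b set \<Rightarrow> (nat \<Rightarrow> 'b \<Rightarrow> 'b)
      \<Rightarrow> ('b \<Rightarrow> nat list set \<Rightarrow> nat list set) \<Rightarrow> bool" where
  "voltage_operator n m FY adjY \<eta> \<longleftrightarrow>
     premaniplex m FY adjY \<and> voltage_assignment n m FY adjY \<eta>"

definition vprod_flags :: "'a set \<Rightarrow> 'b set \<Rightarrow> ('a \<times> 'b) set" where
  "vprod_flags FX FY = FX \<times> FY"

definition vprod_adj :: "nat \<Rightarrow> (nat \<Rightarrow> 'a \<Rightarrow> 'a) \<Rightarrow> (nat \<Rightarrow> 'b \<Rightarrow> 'b)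
      \<Rightarrow> ('b \<Rightarrow> nat list set \<Rightarrow> nat list set) \<Rightarrow> nat \<Rightarrow> 'a \<times> 'b \<Rightarrow> 'a \<times> 'b" where
  "vprod_adj m adjX adjY \<eta> i p =
     (cox_act adjX (\<eta> (snd p) (cox_gen m i)) (fst p), adjY i (snd p))"

end

theory Submission
  imports Defs
begin

(* The action of C^m on X \<rtimes>_\<eta> Y is \<omega>(x, y) = (\<eta>(W_\<omega>(y)) x, \<omega> y): for a single generator
   this is the definition of the adjacencies, and it propagates along words because \<eta> turns
   concatenation of paths into multiplication in C^n. Hence \<omega> fixes (x0, y0) exactly when
   \<omega> \<in> L and \<zeta>(\<omega>) \<in> N. For the second claim, a connected m-premaniplex with base flag p0 is
   isomorphic to C^m / Stab(p0) via p \<mapsto> {\<omega>. \<omega> p0 = p}: by connectivity every flag is some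
   \<omega> p0, and by orbit-stabiliser the set of such \<omega> is the left coset \<omega> Stab(p0). *)

lemma words_append [simp]: "u @ v \<in> words n \<longleftrightarrow> u \<in> words n \<and> v \<in> words n"
  by (auto simp: words_def)

lemma words_Cons [simp]: "i # v \<in> words n \<longleftrightarrow> i < n \<and> v \<in> words n"
  by (auto simp: words_def)

lemma words_Nil [simp]: "[] \<in> words n"
  by (simp add: words_def)

lemma words_rev [simp]: "rev u \<in> words n \<longleftrightarrow> u \<in> words n"
  by (simp add: words_def)

lemma cox_eq_words: "cox_eq n u v \<Longrightarrow> u \<in> words n \<and> v \<in> words n"
  by (induction rule: cox_eq.induct) auto

lemma cox_eq_append_cong:
  "cox_eq n u v \<Longrightarrow> a \<in> words n \<Longrightarrow> b \<in> words n \<Longrightarrow> cox_eq n (a @ u @ b) (a @ v @ b)"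
proof (induction rule: cox_eq.induct)
  case (refl w)
  then show ?case by (auto intro: cox_eq.refl)
next
  case (sym u v)
  then show ?case by (auto intro: cox_eq.sym)
next
  case (trans u v w)
  then show ?case by (auto intro: cox_eq.trans)
next
  case (invol u v i)
  then have "cox_eq n ((a @ u) @ [i, i] @ (v @ b)) ((a @ u) @ (v @ b))"
    by (intro cox_eq.invol) auto
  then show ?case by simp
next
  case (comm u v i j)
  then have "cox_eq n ((a @ u) @ [i, j, i, j] @ (v @ b)) ((a @ u) @ (v @ b))"
    by (intro cox_eq.comm) auto
  then show ?case by simp
qed

lemma cox_eq_rev_append: "a \<in> words n \<Longrightarrow> cox_eq n (rev a @ a) []"
proof (induction a)
  case Nil
  then show ?case by (auto intro: cox_eq.refl)
next
  case (Cons i a)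
  then have "cox_eq n (rev a @ [i, i] @ a) (rev a @ a)"
    by (intro cox_eq.invol) auto
  then show ?case using Cons by (auto intro: cox_eq.trans)
qed

lemma cox_class_eq: "cox_eq n u v \<Longrightarrow> cox_class n u = cox_class n v"
  unfolding cox_class_def by (auto intro: cox_eq.trans cox_eq.sym)

lemma cox_eq_rep: "w \<in> words n \<Longrightarrow> cox_eq n w (cox_rep (cox_class n w))"
  unfolding cox_rep_def cox_class_def mem_Collect_eq
  by (rule someI[of _ w]) (auto intro: cox_eq.refl)

lemma carrier_coxeter: "carrier (coxeter n) = cox_class n ` words n"
  by (simp add: coxeter_def)

lemma one_coxeter: "\<one>\<^bsub>coxeter n\<^esub> = cox_class n []"
  by (simp add: coxeter_def)

lemma mult_coxeter_class:
  assumes "a \<in> words n" "b \<in> words n"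
  shows "cox_class n a \<otimes>\<^bsub>coxeter n\<^esub> cox_class n b = cox_class n (a @ b)"
proof -
  let ?ra = "cox_rep (cox_class n a)" and ?rb = "cox_rep (cox_class n b)"
  have "?rb \<in> words n"
    using cox_eq_rep[OF assms(2)] cox_eq_words by blast
  then have "cox_eq n (?ra @ ?rb) (a @ ?rb)"
    using cox_eq_append_cong[OF cox_eq.sym[OF cox_eq_rep[OF assms(1)]], of "[]" ?rb] by simp
  moreover have "cox_eq n (a @ ?rb) (a @ b)"
    using cox_eq_append_cong[OF cox_eq.sym[OF cox_eq_rep[OF assms(2)]], of a "[]"] assms by simp
  ultimately show ?thesis
    unfolding coxeter_def using cox_class_eq cox_eq.trans by fastforce
qed

lemma cox_gen_carrier: "i < n \<Longrightarrow> cox_gen n i \<in> carrier (coxeter n)"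
  by (auto simp: carrier_coxeter cox_gen_def)

lemma group_coxeter: "group (coxeter n)"
proof (rule groupI)
  fix x assume "x \<in> carrier (coxeter n)"
  then obtain a where a: "a \<in> words n" "x = cox_class n a"
    by (auto simp: carrier_coxeter)
  then have "cox_class n (rev a) \<otimes>\<^bsub>coxeter n\<^esub> x = \<one>\<^bsub>coxeter n\<^esub>"
    using cox_class_eq[OF cox_eq_rev_append[OF a(1)]] by (simp add: mult_coxeter_class one_coxeter)
  then show "\<exists>y\<in>carrier (coxeter n). y \<otimes>\<^bsub>coxeter n\<^esub> x = \<one>\<^bsub>coxeter n\<^esub>"
    using a(1) by (auto simp: carrier_coxeter)
qed (auto simp: carrier_coxeter mult_coxeter_class one_coxeter)

lemma word_act_Nil [simp]: "word_act adj [] x = x"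
  by (simp add: word_act_def)

lemma word_act_Cons [simp]: "word_act adj (i # v) x = adj i (word_act adj v x)"
  by (simp add: word_act_def)

lemma word_act_append [simp]: "word_act adj (u @ v) x = word_act adj u (word_act adj v x)"
  by (simp add: word_act_def)

lemma word_act_closed:
  "\<forall>i<m. \<forall>x\<in>F. adj i x \<in> F \<Longrightarrow> w \<in> words m \<Longrightarrow> x \<in> F \<Longrightarrow> word_act adj w x \<in> F"
  by (induction w) auto

lemma premaniplex_closed: "premaniplex m F adj \<Longrightarrow> \<forall>i<m. \<forall>x\<in>F. adj i x \<in> F"
  by (simp add: premaniplex_def)

definition cox_compatible :: "nat \<Rightarrow> 'a set \<Rightarrow> (nat \<Rightarrow> 'a \<Rightarrow> 'a) \<Rightarrow> bool" where
  "cox_compatible m F adj \<longleftrightarrow> (\<forall>i<m. \<forall>x\<in>F. adj i x \<in> F) \<and>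
     (\<forall>u v x. cox_eq m u v \<longrightarrow> x \<in> F \<longrightarrow> word_act adj u x = word_act adj v x)"

lemma premaniplex_iff_cox_compatible: "premaniplex m F adj \<longleftrightarrow> cox_compatible m F adj"
proof
  assume pm: "premaniplex m F adj"
  then have closed: "\<forall>i<m. \<forall>x\<in>F. adj i x \<in> F"
    by (rule premaniplex_closed)
  have "word_act adj u x = word_act adj v x" if "cox_eq m u v" "x \<in> F" for u v x
    using that
  proof (induction arbitrary: x rule: cox_eq.induct)
    case (invol u v i)
    then have "word_act adj v x \<in> F"
      using word_act_closed[OF closed] by blast
    then show ?case using pm invol by (simp add: premaniplex_def)
  next
    case (comm u v i j)
    then have "word_act adj v x \<in> F"
      using word_act_closed[OF closed] by blast
    then have "adj i (adj j (adj i (adj j (word_act adj v x)))) = word_act adj v x"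
      using pm comm(3-5) unfolding premaniplex_def by blast
    then show ?case by simp
  qed auto
  then show "cox_compatible m F adj"
    using closed by (simp add: cox_compatible_def)
next
  assume cc: "cox_compatible m F adj"
  have act_eq: "word_act adj u x = word_act adj v x" if "cox_eq m u v" "x \<in> F" for u v x
    using cc that unfolding cox_compatible_def by blast
  have "adj i (adj i x) = x" if "i < m" "x \<in> F" for i x
    using act_eq[OF cox_eq.invol[of "[]" m "[]" i]] that by simp
  moreover have "adj i (adj j (adj i (adj j x))) = x"
    if "i < m" "j < m" "i + 2 \<le> j \<or> j + 2 \<le> i" "x \<in> F" for i j x
    using act_eq[OF cox_eq.comm[of "[]" m "[]" i j]] that by simp
  ultimately show "premaniplex m F adj"
    using cc unfolding cox_compatible_def premaniplex_def by blast
qed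

lemma cox_act_class:
  assumes "premaniplex m F adj" "w \<in> words m" "x \<in> F"
  shows "cox_act adj (cox_class m w) x = word_act adj w x"
  using cox_eq_rep[OF assms(2)] assms(1,3)
  unfolding premaniplex_iff_cox_compatible cox_compatible_def cox_act_def by metis

lemma cox_act_closed:
  assumes "premaniplex m F adj" "\<omega> \<in> carrier (coxeter m)" "x \<in> F"
  shows "cox_act adj \<omega> x \<in> F"
proof -
  obtain w where "w \<in> words m" "\<omega> = cox_class m w"
    using assms(2) by (auto simp: carrier_coxeter)
  then show ?thesis
    using cox_act_class[OF assms(1) _ assms(3)] word_act_closed[OF premaniplex_closed[OF assms(1)]] assms(3)
    by simp
qed

lemma cox_act_one:
  "premaniplex m F adj \<Longrightarrow> x \<in> F \<Longrightarrow> cox_act adj \<one>\<^bsub>coxeter m\<^esub> x = x"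
  using cox_act_class[of m F adj "[]"] by (simp add: one_coxeter)

lemma cox_act_gen:
  "premaniplex m F adj \<Longrightarrow> x \<in> F \<Longrightarrow> i < m \<Longrightarrow> cox_act adj (cox_gen m i) x = adj i x"
  using cox_act_class[of m F adj "[i]"] by (simp add: cox_gen_def)

lemma cox_act_mult:
  assumes "premaniplex m F adj" "\<omega> \<in> carrier (coxeter m)" "\<nu> \<in> carrier (coxeter m)" "x \<in> F"
  shows "cox_act adj (\<omega> \<otimes>\<^bsub>coxeter m\<^esub> \<nu>) x = cox_act adj \<omega> (cox_act adj \<nu> x)"
proof -
  obtain a b where ab: "a \<in> words m" "\<omega> = cox_class m a" "b \<in> words m" "\<nu> = cox_class m b"
    using assms(2,3) by (auto simp: carrier_coxeter)
  then have "word_act adj b x \<in> F"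
    using assms(4) word_act_closed[OF premaniplex_closed[OF assms(1)]] by simp
  then show ?thesis
    using ab assms(1,4) by (simp add: cox_act_class mult_coxeter_class)
qed

lemma transporter_eq_lcoset:
  assumes "premaniplex m F adj" "\<omega> \<in> carrier (coxeter m)" "p0 \<in> F"
  shows "{\<nu> \<in> carrier (coxeter m). cox_act adj \<nu> p0 = cox_act adj \<omega> p0}
         = \<omega> <#\<^bsub>coxeter m\<^esub> stab m adj p0"
proof -
  interpret G: group "coxeter m" by (rule group_coxeter)
  note act_mult = cox_act_mult[OF assms(1) _ _ assms(3)]
  have moved_back: "cox_act adj (inv\<^bsub>coxeter m\<^esub> \<omega> \<otimes>\<^bsub>coxeter m\<^esub> \<nu>) p0 = p0"
    if "\<nu> \<in> carrier (coxeter m)" "cox_act adj \<nu> p0 = cox_act adj \<omega> p0" for \<nu>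
  proof -
    have "cox_act adj (inv\<^bsub>coxeter m\<^esub> \<omega> \<otimes>\<^bsub>coxeter m\<^esub> \<nu>) p0
          = cox_act adj (inv\<^bsub>coxeter m\<^esub> \<omega>) (cox_act adj \<omega> p0)"
      using act_mult that assms(2) by simp
    also have "\<dots> = cox_act adj (inv\<^bsub>coxeter m\<^esub> \<omega> \<otimes>\<^bsub>coxeter m\<^esub> \<omega>) p0"
      by (rule act_mult[symmetric]) (simp_all add: assms(2))
    also have "\<dots> = p0"
      using assms cox_act_one by simp
    finally show ?thesis .
  qed
  show ?thesis
  proof (intro equalityI subsetI)
    fix \<nu> assume "\<nu> \<in> {\<nu> \<in> carrier (coxeter m). cox_act adj \<nu> p0 = cox_act adj \<omega> p0}"
    then have \<nu>: "\<nu> \<in> carrier (coxeter m)" "cox_act adj \<nu> p0 = cox_act adj \<omega> p0"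
      by auto
    have "inv\<^bsub>coxeter m\<^esub> \<omega> \<otimes>\<^bsub>coxeter m\<^esub> \<nu> \<in> stab m adj p0"
      using moved_back[OF \<nu>] \<nu>(1) assms(2) by (simp add: stab_def)
    moreover have "\<nu> = \<omega> \<otimes>\<^bsub>coxeter m\<^esub> (inv\<^bsub>coxeter m\<^esub> \<omega> \<otimes>\<^bsub>coxeter m\<^esub> \<nu>)"
      using assms(2) \<nu>(1) by (simp add: G.m_assoc[symmetric])
    ultimately show "\<nu> \<in> \<omega> <#\<^bsub>coxeter m\<^esub> stab m adj p0"
      unfolding l_coset_def by blast
  next
    fix \<nu> assume "\<nu> \<in> \<omega> <#\<^bsub>coxeter m\<^esub> stab m adj p0"
    then obtain h where "h \<in> carrier (coxeter m)" "cox_act adj h p0 = p0"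
      "\<nu> = \<omega> \<otimes>\<^bsub>coxeter m\<^esub> h"
      by (auto simp: l_coset_def stab_def)
    then show "\<nu> \<in> {\<nu> \<in> carrier (coxeter m). cox_act adj \<nu> p0 = cox_act adj \<omega> p0}"
      using act_mult assms(2) by simp
  qed
qed

lemma pm_connected_orbit_eq:
  assumes "premaniplex m F adj" "pm_connected m F adj" "p0 \<in> F"
  shows "F = (\<lambda>\<omega>. cox_act adj \<omega> p0) ` carrier (coxeter m)"
proof (intro equalityI subsetI)
  fix p assume "p \<in> F"
  then obtain w where "w \<in> words m" "p = word_act adj w p0"
    using assms(2,3) unfolding pm_connected_def by metis
  then have "p = cox_act adj (cox_class m w) p0"
    using cox_act_class[OF assms(1) _ assms(3)] by simp
  then show "p \<in> (\<lambda>\<omega>. cox_act adj \<omega> p0) ` carrier (coxeter m)"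
    using \<open>w \<in> words m\<close> by (simp add: carrier_coxeter)
qed (use assms cox_act_closed in auto)

lemma connected_premaniplex_iso_coset:
  assumes pm: "premaniplex m F adj" and conn: "pm_connected m F adj" and p0: "p0 \<in> F"
  shows "\<exists>\<phi>. pm_iso m F adj (coset_flags m (stab m adj p0)) (coset_adj m) \<phi>
              \<and> \<phi> p0 = stab m adj p0"
proof -
  interpret G: group "coxeter m" by (rule group_coxeter)
  let ?K = "stab m adj p0"
  define \<phi> where "\<phi> p = {\<nu> \<in> carrier (coxeter m). cox_act adj \<nu> p0 = p}" for p
  have \<phi>_act: "\<phi> (cox_act adj \<omega> p0) = \<omega> <#\<^bsub>coxeter m\<^esub> ?K" if "\<omega> \<in> carrier (coxeter m)" for \<omega>
    using transporter_eq_lcoset[OF pm that p0] by (simp add: \<phi>_def)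
  note orbit = pm_connected_orbit_eq[OF pm conn p0]
  have "inj_on \<phi> F"
  proof (rule inj_onI)
    fix p q assume "p \<in> F" "q \<in> F" and \<phi>_eq: "\<phi> p = \<phi> q"
    then obtain \<omega> where "\<omega> \<in> carrier (coxeter m)" "p = cox_act adj \<omega> p0"
      using orbit by blast
    then have "\<omega> \<in> \<phi> q"
      using \<phi>_eq by (auto simp: \<phi>_def)
    then show "p = q"
      using \<open>p = cox_act adj \<omega> p0\<close> by (simp add: \<phi>_def)
  qed
  moreover have "\<phi> ` F = coset_flags m ?K"
  proof -
    have "\<phi> ` F = (\<lambda>\<omega>. \<omega> <#\<^bsub>coxeter m\<^esub> ?K) ` carrier (coxeter m)"
      by (subst orbit) (simp add: image_image \<phi>_act cong: image_cong)
    then show ?thesis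
      by (simp add: coset_flags_def Setcompr_eq_image)
  qed
  moreover have "\<phi> (adj i p) = coset_adj m i (\<phi> p)" if i: "i < m" and "p \<in> F" for i p
  proof -
    obtain \<omega> where \<omega>: "\<omega> \<in> carrier (coxeter m)" "p = cox_act adj \<omega> p0"
      using orbit \<open>p \<in> F\<close> by blast
    have "adj i p = cox_act adj (cox_gen m i \<otimes>\<^bsub>coxeter m\<^esub> \<omega>) p0"
      using cox_act_mult[OF pm cox_gen_carrier[OF i] \<omega>(1) p0] cox_act_gen[OF pm \<open>p \<in> F\<close> i] \<omega>(2)
      by simp
    then have "\<phi> (adj i p) = (cox_gen m i \<otimes>\<^bsub>coxeter m\<^esub> \<omega>) <#\<^bsub>coxeter m\<^esub> ?K"
      using \<phi>_act cox_gen_carrier[OF i] \<omega>(1) by simp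
    also have "\<dots> = cox_gen m i <#\<^bsub>coxeter m\<^esub> (\<omega> <#\<^bsub>coxeter m\<^esub> ?K)"
      by (rule G.lcos_m_assoc[symmetric]) (auto simp: stab_def cox_gen_carrier i \<omega>(1))
    finally show ?thesis
      using \<phi>_act[OF \<omega>(1)] \<omega>(2) by (simp add: coset_adj_def)
  qed
  moreover have "\<phi> p0 = ?K"
    by (simp add: \<phi>_def stab_def)
  ultimately show ?thesis
    unfolding pm_iso_def bij_betw_def by blast
qed

locale voltage_product =
  fixes n m :: nat
    and FX :: "'a set" and adjX :: "nat \<Rightarrow> 'a \<Rightarrow> 'a"
    and FY :: "'b set" and adjY :: "nat \<Rightarrow> 'b \<Rightarrow> 'b"
    and \<eta> :: "'b \<Rightarrow> nat list set \<Rightarrow> nat list set"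
  assumes premaniplex_X: "premaniplex n FX adjX"
    and voltage_operator: "voltage_operator n m FY adjY \<eta>"
begin

abbreviation adjV :: "nat \<Rightarrow> 'a \<times> 'b \<Rightarrow> 'a \<times> 'b" where
  "adjV \<equiv> vprod_adj m adjX adjY \<eta>"

lemma premaniplex_Y: "premaniplex m FY adjY"
  using voltage_operator by (simp add: voltage_operator_def)

lemma voltage_carrier:
  "y \<in> FY \<Longrightarrow> \<omega> \<in> carrier (coxeter m) \<Longrightarrow> \<eta> y \<omega> \<in> carrier (coxeter n)"
  using voltage_operator by (simp add: voltage_operator_def voltage_assignment_def)

lemma voltage_mult:
  "y \<in> FY \<Longrightarrow> \<omega> \<in> carrier (coxeter m) \<Longrightarrow> \<nu> \<in> carrier (coxeter m) \<Longrightarrow>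
   \<eta> y (\<nu> \<otimes>\<^bsub>coxeter m\<^esub> \<omega>) = \<eta> (cox_act adjY \<omega> y) \<nu> \<otimes>\<^bsub>coxeter n\<^esub> \<eta> y \<omega>"
  using voltage_operator by (simp add: voltage_operator_def voltage_assignment_def)

lemma voltage_one:
  assumes "y \<in> FY"
  shows "\<eta> y \<one>\<^bsub>coxeter m\<^esub> = \<one>\<^bsub>coxeter n\<^esub>"
proof -
  interpret Gm: group "coxeter m" by (rule group_coxeter)
  interpret Gn: group "coxeter n" by (rule group_coxeter)
  have "\<eta> y \<one>\<^bsub>coxeter m\<^esub> \<otimes>\<^bsub>coxeter n\<^esub> \<eta> y \<one>\<^bsub>coxeter m\<^esub> = \<eta> y \<one>\<^bsub>coxeter m\<^esub>"
    using voltage_mult[OF assms Gm.one_closed Gm.one_closed] cox_act_one[OF premaniplex_Y assms]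
    by simp
  then show ?thesis
    using Gn.l_cancel_one' voltage_carrier[OF assms Gm.one_closed] by simp
qed

lemma word_act_vprod:
  assumes "w \<in> words m" "x \<in> FX" "y \<in> FY"
  shows "word_act adjV w (x, y) = (cox_act adjX (\<eta> y (cox_class m w)) x, word_act adjY w y)"
  using assms(1)
proof (induction w)
  case Nil
  show ?case
    using voltage_one[OF assms(3)] cox_act_one[OF premaniplex_X assms(2)] by (simp add: one_coxeter)
next
  case (Cons i w)
  then have i: "i < m" and w: "w \<in> words m"
    by auto
  have cw: "cox_class m w \<in> carrier (coxeter m)"
    using w by (simp add: carrier_coxeter)
  have yw: "cox_act adjY (cox_class m w) y = word_act adjY w y"
    using cox_act_class[OF premaniplex_Y w assms(3)] .
  then have yw_in: "word_act adjY w y \<in> FY"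
    using cox_act_closed[OF premaniplex_Y cw assms(3)] by simp
  have "cox_class m (i # w) = cox_gen m i \<otimes>\<^bsub>coxeter m\<^esub> cox_class m w"
    using mult_coxeter_class[of "[i]" m w] i w by (simp add: cox_gen_def)
  then have "\<eta> y (cox_class m (i # w))
             = \<eta> (word_act adjY w y) (cox_gen m i) \<otimes>\<^bsub>coxeter n\<^esub> \<eta> y (cox_class m w)"
    using voltage_mult[OF assms(3) cw cox_gen_carrier[OF i]] yw by simp
  then have "cox_act adjX (\<eta> y (cox_class m (i # w))) x =
             cox_act adjX (\<eta> (word_act adjY w y) (cox_gen m i)) (cox_act adjX (\<eta> y (cox_class m w)) x)"
    using cox_act_mult[OF premaniplex_X voltage_carrier[OF yw_in cox_gen_carrier[OF i]]
        voltage_carrier[OF assms(3) cw] assms(2)]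
    by simp
  then show ?case
    using Cons.IH[OF w] by (simp add: vprod_adj_def)
qed

lemma premaniplex_vprod: "premaniplex m (vprod_flags FX FY) adjV"
  unfolding premaniplex_iff_cox_compatible cox_compatible_def vprod_flags_def
proof (intro conjI allI impI ballI)
  fix i p assume "i < m" "p \<in> FX \<times> FY"
  then show "adjV i p \<in> FX \<times> FY"
    using cox_act_closed[OF premaniplex_X voltage_carrier[OF _ cox_gen_carrier]]
      premaniplex_closed[OF premaniplex_Y]
    by (auto simp: vprod_adj_def)
next
  fix u v p assume uv: "cox_eq m u v" and "p \<in> FX \<times> FY"
  then obtain x y where xy: "p = (x, y)" "x \<in> FX" "y \<in> FY"
    by auto
  have "word_act adjY u y = word_act adjY v y"
    using premaniplex_Y uv xy(3) unfolding premaniplex_iff_cox_compatible cox_compatible_def by blast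
  then show "word_act adjV u p = word_act adjV v p"
    using cox_eq_words[OF uv] cox_class_eq[OF uv] word_act_vprod xy by simp
qed

lemma cox_act_vprod:
  assumes "\<omega> \<in> carrier (coxeter m)" "x \<in> FX" "y \<in> FY"
  shows "cox_act adjV \<omega> (x, y) = (cox_act adjX (\<eta> y \<omega>) x, cox_act adjY \<omega> y)"
proof -
  obtain w where "w \<in> words m" "\<omega> = cox_class m w"
    using assms(1) by (auto simp: carrier_coxeter)
  then show ?thesis
    using cox_act_class[OF premaniplex_vprod] cox_act_class[OF premaniplex_Y] word_act_vprod assms(2,3)
    by (simp add: vprod_flags_def)
qed

lemma stab_vprod:
  assumes "x0 \<in> FX" "y0 \<in> FY"
  shows "stab m adjV (x0, y0) = {\<omega> \<in> stab m adjY y0. \<eta> y0 \<omega> \<in> stab n adjX x0}"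
  using cox_act_vprod[OF _ assms] voltage_carrier[OF assms(2)] by (auto simp: stab_def)

end

theorem lemma5p2:
  fixes n m :: nat
    and FX :: "'a set" and adjX :: "nat \<Rightarrow> 'a \<Rightarrow> 'a" and x0 :: 'a
    and FY :: "'b set" and adjY :: "nat \<Rightarrow> 'b \<Rightarrow> 'b" and y0 :: 'b
    and \<eta> :: "'b \<Rightarrow> nat list set \<Rightarrow> nat list set"
  assumes "premaniplex n FX adjX" and "pm_connected n FX adjX" and "x0 \<in> FX"
    and "voltage_operator n m FY adjY \<eta>" and "pm_connected m FY adjY" and "y0 \<in> FY"
  defines "N \<equiv> stab n adjX x0"
    and "L \<equiv> stab m adjY y0"
    and "\<zeta> \<equiv> (\<lambda>\<omega>. \<eta> y0 \<omega>)"
  shows "stab m (vprod_adj m adjX adjY \<eta>) (x0, y0) = {\<omega> \<in> L. \<zeta> \<omega> \<in> N}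
     \<and> (pm_connected m (vprod_flags FX FY) (vprod_adj m adjX adjY \<eta>) \<longrightarrow>
         (\<exists>\<phi>. pm_iso m (vprod_flags FX FY) (vprod_adj m adjX adjY \<eta>)
                 (coset_flags m {\<omega> \<in> L. \<zeta> \<omega> \<in> N}) (coset_adj m)  \<phi>
              \<and> \<phi> (x0, y0) = {\<omega> \<in> L. \<zeta> \<omega> \<in> N}))"
proof -
  interpret voltage_product n m FX adjX FY adjY \<eta>
    using assms(1,4) by unfold_locales
  have stab_eq: "stab m adjV (x0, y0) = {\<omega> \<in> L. \<zeta> \<omega> \<in> N}"
    unfolding L_def N_def \<zeta>_def using stab_vprod[OF assms(3,6)] .
  have "(x0, y0) \<in> vprod_flags FX FY"
    using assms(3,6) by (simp add: vprod_flags_def)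
  then show ?thesis
    using stab_eq connected_premaniplex_iso_coset[OF premaniplex_vprod] by metis
qed

end
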